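(* Under the bounded overflow sharing model with $\mu_1=\mu_2$, if $E(N_1,a_1)=E(N_2,a_2)$, then the utilitarian bargaining solution, i.e. the minimizer of $\frac{\lambda_1}{\lambda_1+\lambda_2}B_1(x_1,x_2)+\frac{\lambda_2}{\lambda_1+\lambda_2}B_2(x_1,x_2)$ over the closure of $\hat{\mathcal{P}}$, is $(1,1)$.
   Context: Two service providers $P_1,P_2$. Provider $P_i$ has $N_i$ servers ($N_i$ a positive integer); its calls arrive as a Poisson process of rate $\lambda_i>0$ with i.i.d. holding times of mean $1/\mu_i<\infty$, all independent; $a_i=\lambda_i/\mu_i$. $E(N,a)=\frac{a^N/N!}{\sum_{j=0}^N a^j/j!}$ is the Erlang-B formula. $-i$ denotes the index other than $i$. $n_i$ is the number of active calls of $P_i$; calls are not attached to specific servers (call repacking). Bounded overflow model with parameter $(k_1,k_2)$, $k_i\in[0,N_i]$, $\{k\}=k-\lfloor k\rfloor$: an arriving call of $P_{-i}$ is admitted if $n_{-i}<N_{-i}+\lfloor k_i\rfloor$ and $n_1+n_2<N_1+N_2$; admitted with probability $\{k_i\}$ if $n_{-i}=N_{-i}+\lfloor k_i\rfloor$ and $n_1+n_2<N_1+N_2$; otherwise blocked. For $(x_1,x_2)\in[0,1]^2$, $B_i(x_1,x_2)$ is the steady-state blocking probability of $P_i$'s calls in this model with $(k_1,k_2)=(x_1N_1,x_2N_2)$. A configuration $x\in[0,1]^2$ is QoS-stable if $B_i(x)<E(N_i,a_i)$ for $i=1,2$; it is Pareto-efficient if it is QoS-stable and there is no $x'\in[0,1]^2$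 with $B_i(x')\le B_i(x)$ for all $i$ and $B_i(x')<B_i(x)$ for some $i$. $\hat{\mathcal{P}}$ is the set of Pareto-efficient configurations. *)

theory Defs
  imports "HOL-Analysis.Analysis"
begin

definition erlangB :: "nat \<Rightarrow> real \<Rightarrow> real" where
  "erlangB N a = (a ^ N / fact N) / (\<Sum>j\<le>N. a ^ j / fact j)"

text \<open>Admission probability of an arriving call of a provider with N_own servers,
  currently n_own active calls, when the other provider lends k servers
  (bounded overflow), total occupancy tot and total capacity C.\<close>
definition adm :: "nat \<Rightarrow> real \<Rightarrow> nat \<Rightarrow> nat \<Rightarrow> nat \<Rightarrow> real" where
  "adm Nown k n tot C =
     (if tot < C then
        (if n < Nown + nat \<lfloor>k\<rfloor> then 1
         else if n = Nown + nat \<lfloor>k\<rfloor> then frac k else 0)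
      else 0)"

definition bo_states :: "nat \<Rightarrow> nat \<Rightarrow> (nat \<times> nat) set" where
  "bo_states N1 N2 = {(n1, n2). n1 + n2 \<le> N1 + N2}"

text \<open>Transition rates of the bounded overflow model with parameter (k1,k2)
  (k_i = number of servers of P_i that P_{-i} may use).\<close>
definition bo_rate :: "nat \<Rightarrow> nat \<Rightarrow> real \<Rightarrow> real \<Rightarrow> real \<Rightarrow> real \<Rightarrow> real \<Rightarrow> real
    \<Rightarrow> nat \<times> nat \<Rightarrow> nat \<times> nat \<Rightarrow> real" where
  "bo_rate N1 N2 l1 l2 m1 m2 k1 k2 s t =
     (case s of (n1, n2) \<Rightarrow>
        if t = (Suc n1, n2) then l1 * adm N1 k2 n1 (n1 + n2) (N1 + N2)
        else if t = (n1, Suc n2) then l2 * adm N2 k1 n2 (n1 + n2) (N1 + N2)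
        else if 0 < n1 \<and> t = (n1 - 1, n2) then real n1 * m1
        else if 0 < n2 \<and> t = (n1, n2 - 1) then real n2 * m2
        else 0)"

definition bo_stationary :: "nat \<Rightarrow> nat \<Rightarrow> real \<Rightarrow> real \<Rightarrow> real \<Rightarrow> real \<Rightarrow> real \<Rightarrow> real
    \<Rightarrow> (nat \<times> nat \<Rightarrow> real) \<Rightarrow> bool" where
  "bo_stationary N1 N2 l1 l2 m1 m2 k1 k2 p \<longleftrightarrow>
     (\<forall>s. s \<notin> bo_states N1 N2 \<longrightarrow> p s = 0) \<and>
     (\<forall>s\<in>bo_states N1 N2. 0 \<le> p s) \<and>
     (\<Sum>s\<in>bo_states N1 N2. p s) = 1 \<and>
     (\<forall>s\<in>bo_states N1 N2.
        (\<Sum>t\<in>bo_states N1 N2 - {s}. p t * bo_rate N1 N2 l1 l2 m1 m2 k1 k2 t s)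
        = p s * (\<Sum>t\<in>bo_states N1 N2 - {s}. bo_rate N1 N2 l1 l2 m1 m2 k1 k2 s t))"

definition bo_pi :: "nat \<Rightarrow> nat \<Rightarrow> real \<Rightarrow> real \<Rightarrow> real \<Rightarrow> real \<Rightarrow> real \<Rightarrow> real
    \<Rightarrow> nat \<times> nat \<Rightarrow> real" where
  "bo_pi N1 N2 l1 l2 m1 m2 k1 k2 = (THE p. bo_stationary N1 N2 l1 l2 m1 m2 k1 k2 p)"

text \<open>Steady-state blocking probabilities B_1, B_2 (PASTA) for the configuration
  x = (x1,x2), i.e. (k1,k2) = (x1 N1, x2 N2).\<close>
definition B1 :: "nat \<Rightarrow> nat \<Rightarrow> real \<Rightarrow> real \<Rightarrow> real \<Rightarrow> real \<Rightarrow> real \<times> real \<Rightarrow> real" where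
  "B1 N1 N2 l1 l2 m1 m2 x =
     (let k1 = fst x * real N1; k2 = snd x * real N2;
          p = bo_pi N1 N2 l1 l2 m1 m2 k1 k2
      in \<Sum>s\<in>bo_states N1 N2. p s * (1 - adm N1 k2 (fst s) (fst s + snd s) (N1 + N2)))"

definition B2 :: "nat \<Rightarrow> nat \<Rightarrow> real \<Rightarrow> real \<Rightarrow> real \<Rightarrow> real \<Rightarrow> real \<times> real \<Rightarrow> real" where
  "B2 N1 N2 l1 l2 m1 m2 x =
     (let k1 = fst x * real N1; k2 = snd x * real N2;
          p = bo_pi N1 N2 l1 l2 m1 m2 k1 k2
      in \<Sum>s\<in>bo_states N1 N2. p s * (1 - adm N2 k1 (snd s) (fst s + snd s) (N1 + N2)))"

definition unit_square :: "(real \<times> real) set" where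
  "unit_square = {0..1} \<times> {0..1}"

definition QoS_stable :: "nat \<Rightarrow> nat \<Rightarrow> real \<Rightarrow> real \<Rightarrow> real \<Rightarrow> real \<Rightarrow> real \<times> real \<Rightarrow> bool" where
  "QoS_stable N1 N2 l1 l2 m1 m2 x \<longleftrightarrow>
     x \<in> unit_square \<and>
     B1 N1 N2 l1 l2 m1 m2 x < erlangB N1 (l1 / m1) \<and>
     B2 N1 N2 l1 l2 m1 m2 x < erlangB N2 (l2 / m2)"

definition pareto_set :: "nat \<Rightarrow> nat \<Rightarrow> real \<Rightarrow> real \<Rightarrow> real \<Rightarrow> real \<Rightarrow> (real \<times> real) set" where
  "pareto_set N1 N2 l1 l2 m1 m2 =
     {x. QoS_stable N1 N2 l1 l2 m1 m2 x \<and>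
         \<not> (\<exists>x'\<in>unit_square.
               B1 N1 N2 l1 l2 m1 m2 x' \<le> B1 N1 N2 l1 l2 m1 m2 x \<and>
               B2 N1 N2 l1 l2 m1 m2 x' \<le> B2 N1 N2 l1 l2 m1 m2 x \<and>
               (B1 N1 N2 l1 l2 m1 m2 x' < B1 N1 N2 l1 l2 m1 m2 x \<or>
                B2 N1 N2 l1 l2 m1 m2 x' < B2 N1 N2 l1 l2 m1 m2 x))}"

definition util_obj :: "nat \<Rightarrow> nat \<Rightarrow> real \<Rightarrow> real \<Rightarrow> real \<Rightarrow> real \<Rightarrow> real \<times> real \<Rightarrow> real" where
  "util_obj N1 N2 l1 l2 m1 m2 x =
     l1 / (l1 + l2) * B1 N1 N2 l1 l2 m1 m2 x + l2 / (l1 + l2) * B2 N1 N2 l1 l2 m1 m2 x"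

end

theory Submission
  imports Defs
begin

(* The occupancy process (n1, n2) is reversible: its stationary law is the product form
   pi(n1, n2) ~ a1^n1/n1! phi1(n1) * a2^n2/n2! phi2(n2) on the state space, where phi_i(n) is
   the product of the admission probabilities of P_i at occupancies 0, ..., n - 1 (the total
   capacity only truncates the state space), and a maximum principle for the ratio p/pi shows
   that it is the only stationary law. Flow balance across the arrival
   transitions gives l_i (1 - B_i) = m_i E[n_i], so for m1 = m2 = m the utilitarian objective
   is 1 - m E[n1 + n2]/(l1 + l2), and minimising it means maximising the mean total occupancy.
   Under full sharing the total occupancy is Poisson(a1 + a2) truncated at N1 + N2; in every
   other configuration its weights W satisfy (n+1) W(n+1) <= (a1 + a2) W(n), strictly at the
   top level, so W/Poisson is decreasing and a Chebyshev sum inequality makes the mean strictly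
   smaller. Without sharing B_i = E(N_i, a_i); under full sharing B1 = B2 = objective, which is
   below the common Erlang value, so (1, 1) is QoS-stable, and as the strict minimiser of the
   objective it is Pareto-efficient. *)

section \<open>Stationary laws of reversible chains\<close>

definition global_balance :: "'s set \<Rightarrow> ('s \<Rightarrow> 's \<Rightarrow> real) \<Rightarrow> ('s \<Rightarrow> real) \<Rightarrow> bool" where
  "global_balance S q p \<longleftrightarrow>
     (\<forall>s\<in>S. (\<Sum>t\<in>S - {s}. p t * q t s) = p s * (\<Sum>t\<in>S - {s}. q s t))"

definition detailed_balance :: "'s set \<Rightarrow> ('s \<Rightarrow> 's \<Rightarrow> real) \<Rightarrow> ('s \<Rightarrow> real) \<Rightarrow> bool" where
  "detailed_balance S q p \<longleftrightarrow> (\<forall>s\<in>S. \<forall>t\<in>S. p s * q s t = p t * q t s)"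

definition rate_graph :: "'s set \<Rightarrow> ('s \<Rightarrow> 's \<Rightarrow> real) \<Rightarrow> ('s \<times> 's) set" where
  "rate_graph S q = {(s, t). s \<in> S \<and> t \<in> S \<and> s \<noteq> t \<and> 0 < q s t}"

lemma detailed_balance_imp_global_balance:
  assumes "detailed_balance S q p"
  shows "global_balance S q p"
  unfolding global_balance_def
proof
  fix s assume "s \<in> S"
  then have "(\<Sum>t\<in>S - {s}. p t * q t s) = (\<Sum>t\<in>S - {s}. p s * q s t)"
    using assms by (intro sum.cong) (auto simp: detailed_balance_def)
  then show "(\<Sum>t\<in>S - {s}. p t * q t s) = p s * (\<Sum>t\<in>S - {s}. q s t)"
    by (simp add: sum_distrib_left)
qed

lemma global_balance_uminus: "global_balance S q p \<Longrightarrow> global_balance S q (\<lambda>s. - p s)"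
  by (simp add: global_balance_def sum_negf)

lemma global_balance_cut:
  assumes "finite S" and "A \<subseteq> S" and bal: "global_balance S q p"
  shows "(\<Sum>s\<in>A. \<Sum>t\<in>S - A. p t * q t s) = (\<Sum>s\<in>A. \<Sum>t\<in>S - A. p s * q s t)"
proof -
  have fin: "finite A" using assms finite_subset by blast
  have split: "(\<Sum>t\<in>S - {s}. f t) = (\<Sum>t\<in>{t\<in>A. t \<noteq> s}. f t) + (\<Sum>t\<in>S - A. f t)"
    if "s \<in> A" for s and f :: "_ \<Rightarrow> real"
  proof -
    have "S - {s} = {t\<in>A. t \<noteq> s} \<union> (S - A)" using that \<open>A \<subseteq> S\<close> by auto
    then show ?thesis using \<open>finite S\<close> fin by (simp add: sum.union_disjoint Int_def)
  qed
  have "\<forall>s\<in>A. (\<Sum>t\<in>S - {s}. p t * q t s) = (\<Sum>t\<in>S - {s}. p s * q s t)"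
    using bal \<open>A \<subseteq> S\<close> by (auto simp: global_balance_def sum_distrib_left)
  then have "(\<Sum>s\<in>A. \<Sum>t\<in>S - {s}. p t * q t s) = (\<Sum>s\<in>A. \<Sum>t\<in>S - {s}. p s * q s t)"
    by (simp cong: sum.cong)
  moreover have "(\<Sum>s\<in>A. \<Sum>t\<in>{t\<in>A. t \<noteq> s}. p t * q t s)
      = (\<Sum>s\<in>A. \<Sum>t\<in>{t\<in>A. t \<noteq> s}. p s * q s t)"
    using sum.swap_restrict[OF fin fin, of "\<lambda>t s. p t * q t s" "\<lambda>t s. t \<noteq> s"]
    by (simp add: eq_commute)
  ultimately show ?thesis by (simp add: split sum.distrib)
qed

lemma global_balance_no_inflow:
  assumes "finite S" and "A \<subseteq> S" and bal: "global_balance S q p"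
    and p_nonneg: "\<forall>s\<in>S. 0 \<le> p s" and q_nonneg: "\<forall>s\<in>S. \<forall>t\<in>S. 0 \<le> q s t"
    and no_inflow: "\<forall>s\<in>A. \<forall>t\<in>S - A. q t s = 0"
    and "s \<in> A" "t \<in> S - A"
  shows "p s * q s t = 0"
proof -
  have fin: "finite A" using assms finite_subset by blast
  have nonneg: "0 \<le> p s * q s t" if "s \<in> A" "t \<in> S - A" for s t
    using that \<open>A \<subseteq> S\<close> p_nonneg q_nonneg by auto
  have "(\<Sum>s\<in>A. \<Sum>t\<in>S - A. p s * q s t) = 0"
    using global_balance_cut[OF assms(1-3)] no_inflow by simp
  then have "(\<Sum>t\<in>S - A. p s * q s t) = 0"
    using \<open>s \<in> A\<close> fin nonneg by (subst (asm) sum_nonneg_eq_0_iff) (auto intro: sum_nonneg)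
  then show ?thesis
    using \<open>t \<in> S - A\<close> \<open>s \<in> A\<close> \<open>finite S\<close> nonneg by (subst (asm) sum_nonneg_eq_0_iff) auto
qed

locale reversible_chain =
  fixes S :: "'s set" and q :: "'s \<Rightarrow> 's \<Rightarrow> real" and \<pi> :: "'s \<Rightarrow> real"
  assumes finite_states: "finite S"
    and rates_nonneg: "\<And>s t. s \<in> S \<Longrightarrow> t \<in> S \<Longrightarrow> 0 \<le> q s t"
    and reversible: "detailed_balance S q \<pi>"
    and measure_nonneg: "\<And>s. s \<in> S \<Longrightarrow> 0 \<le> \<pi> s"
begin

(* Global balance of p and detailed balance of pi make p/pi harmonic at s: a weighted mean of
   its values at the neighbours of s. *)
lemma ratio_min_spreads:
  assumes bal: "global_balance S q p" and vanish: "\<forall>s\<in>S. \<pi> s = 0 \<longrightarrow> p s = 0"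
    and s: "s \<in> S" "0 < \<pi> s" and min: "\<forall>t\<in>S. 0 < \<pi> t \<longrightarrow> p s / \<pi> s \<le> p t / \<pi> t"
    and edge: "(s, t) \<in> rate_graph S q"
  shows "0 < \<pi> t \<and> p t / \<pi> t = p s / \<pi> s"
proof -
  define h where "h t = p t / \<pi> t" for t
  have p_eq: "p t = h t * \<pi> t" if "t \<in> S" for t
    using that vanish by (cases "\<pi> t = 0") (auto simp: h_def)
  have \<pi>_pos: "0 < \<pi> t" if "t \<in> S" "0 < q s t" for t
  proof -
    have "\<pi> t * q t s = \<pi> s * q s t"
      using reversible s(1) that(1) by (simp add: detailed_balance_def)
    then have "\<pi> t \<noteq> 0" using s(2) that(2) by auto
    then show ?thesis using measure_nonneg that(1) by (simp add: order_less_le)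
  qed
  have "\<pi> s * (\<Sum>t\<in>S - {s}. h t * q s t) = \<pi> s * (\<Sum>t\<in>S - {s}. h s * q s t)"
  proof -
    have "(\<Sum>t\<in>S - {s}. p t * q t s) = \<pi> s * (\<Sum>t\<in>S - {s}. h t * q s t)"
      unfolding sum_distrib_left
      using reversible s(1) by (intro sum.cong) (auto simp: p_eq detailed_balance_def)
    then show ?thesis
      using bal s(1) by (simp add: global_balance_def p_eq sum_distrib_left mult_ac)
  qed
  then have "(\<Sum>t\<in>S - {s}. q s t * (h t - h s)) = 0"
    using s(2) by (simp add: algebra_simps sum_subtractf)
  moreover have "0 \<le> q s t * (h t - h s)" if "t \<in> S - {s}" for t
  proof (cases "q s t = 0")
    case False
    then have "0 < q s t" using rates_nonneg s(1) that by (simp add: order_less_le)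
    then show ?thesis using min \<pi>_pos that by (simp add: h_def)
  qed simp
  moreover have "t \<in> S - {s}" using edge by (auto simp: rate_graph_def)
  ultimately have "q s t * (h t - h s) = 0"
    using finite_states by (subst (asm) sum_nonneg_eq_0_iff) auto
  then show ?thesis using edge \<pi>_pos by (auto simp: rate_graph_def h_def)
qed

lemma ratio_min_reachable:
  assumes bal: "global_balance S q p" and vanish: "\<forall>s\<in>S. \<pi> s = 0 \<longrightarrow> p s = 0"
    and s: "s \<in> S" "0 < \<pi> s" and min: "\<forall>t\<in>S. 0 < \<pi> t \<longrightarrow> p s / \<pi> s \<le> p t / \<pi> t"
    and path: "(s, t) \<in> (rate_graph S q)\<^sup>*"
  shows "0 < \<pi> t \<and> p t / \<pi> t = p s / \<pi> s"
  using path
proof (induction rule: rtrancl_induct)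
  case (step u v)
  have "u \<in> S" using step.hyps(2) by (simp add: rate_graph_def)
  then have "0 < \<pi> v \<and> p v / \<pi> v = p u / \<pi> u"
    using step.IH min by (intro ratio_min_spreads[OF bal vanish _ _ _ step.hyps(2)]) auto
  then show ?case using step.IH by simp
qed (use s in simp)

(* The minimum and, applied to -p, the maximum of p/pi both propagate to s0. *)
theorem balanced_proportional:
  assumes bal: "global_balance S q p" and vanish: "\<forall>s\<in>S. \<pi> s = 0 \<longrightarrow> p s = 0"
    and s0: "s0 \<in> S" "0 < \<pi> s0"
    and connected: "\<forall>s\<in>S. 0 < \<pi> s \<longrightarrow> (s, s0) \<in> (rate_graph S q)\<^sup>*"
  shows "\<forall>s\<in>S. p s = p s0 / \<pi> s0 * \<pi> s"
proof -
  define P where "P = {s\<in>S. 0 < \<pi> s}"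
  have P: "finite P" "P \<noteq> {}" using finite_states s0 by (auto simp: P_def)
  obtain smin where smin: "smin \<in> P" "\<forall>t\<in>P. p smin / \<pi> smin \<le> p t / \<pi> t"
    using ex_is_arg_min_if_finite[OF P, of "\<lambda>t. p t / \<pi> t"] by (auto simp: is_arg_min_linorder)
  obtain smax where smax: "smax \<in> P" "\<forall>t\<in>P. - p smax / \<pi> smax \<le> - p t / \<pi> t"
    using ex_is_arg_min_if_finite[OF P, of "\<lambda>t. - p t / \<pi> t"]
    by (auto simp: is_arg_min_linorder)
  have "p s0 / \<pi> s0 = p smin / \<pi> smin"
    using ratio_min_reachable[OF bal vanish, of smin s0] smin connected by (auto simp: P_def)
  moreover have "- p s0 / \<pi> s0 = - p smax / \<pi> smax"
    using ratio_min_reachable[OF global_balance_uminus[OF bal], of smax s0] smax connected vanish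
    by (auto simp: P_def)
  ultimately have "p s / \<pi> s = p s0 / \<pi> s0" if "s \<in> P" for s
    using that smin smax by (smt (verit) minus_divide_left)
  then show ?thesis
    using vanish measure_nonneg by (metis (mono_tags) P_def mem_Collect_eq mult_zero_right
        nonzero_divide_eq_eq order_less_le)
qed

end

section \<open>Truncated Poisson weights and their convolutions\<close>

definition admit_level :: "nat \<Rightarrow> real \<Rightarrow> nat \<Rightarrow> real" where
  "admit_level N k n = (if n < N + nat \<lfloor>k\<rfloor> then 1 else if n = N + nat \<lfloor>k\<rfloor> then frac k else 0)"

lemma adm_eq_admit_level: "adm N k n tot C = (if tot < C then admit_level N k n else 0)"
  by (simp add: adm_def admit_level_def)

lemma admit_level_nonneg: "0 \<le> admit_level N k n"
  by (simp add: admit_level_def frac_ge_0)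

lemma admit_level_le_1: "admit_level N k n \<le> 1"
  by (simp add: admit_level_def frac_lt_1 less_imp_le)

definition admit_prod :: "nat \<Rightarrow> real \<Rightarrow> nat \<Rightarrow> real" where
  "admit_prod N k n = (\<Prod>j<n. admit_level N k j)"

lemma admit_prod_Suc: "admit_prod N k (Suc n) = admit_prod N k n * admit_level N k n"
  by (simp add: admit_prod_def)

lemma admit_prod_nonneg: "0 \<le> admit_prod N k n"
  unfolding admit_prod_def by (intro prod_nonneg) (simp add: admit_level_nonneg)

lemma admit_prod_Suc_le: "admit_prod N k (Suc n) \<le> admit_prod N k n"
  unfolding admit_prod_Suc using admit_prod_nonneg admit_level_le_1 by (simp add: mult_left_le)

lemma admit_prod_eq_1: "n \<le> N + nat \<lfloor>k\<rfloor> \<Longrightarrow> admit_prod N k n = 1"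
  unfolding admit_prod_def by (intro prod.neutral) (auto simp: admit_level_def)

lemma admit_prod_drop: "admit_prod N k (Suc (N + nat \<lfloor>k\<rfloor>)) < admit_prod N k (N + nat \<lfloor>k\<rfloor>)"
  by (simp add: admit_prod_Suc admit_prod_eq_1 admit_level_def frac_lt_1)

lemma admit_prod_eq_0_iff: "admit_prod N k n = 0 \<longleftrightarrow> 0 < n \<and> admit_level N k (n - 1) = 0"
  by (cases n) (auto simp: admit_prod_def admit_level_def split: if_splits)

lemma admit_prod_no_borrowing: "admit_prod N 0 n = (if n \<le> N then 1 else 0)"
proof (cases "n \<le> N")
  case False
  then have "admit_level N 0 (n - 1) = 0" by (auto simp: admit_level_def)
  then show ?thesis using False admit_prod_eq_0_iff by auto
qed (simp add: admit_prod_eq_1)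

definition poisson_weight :: "real \<Rightarrow> (nat \<Rightarrow> real) \<Rightarrow> nat \<Rightarrow> real" where
  "poisson_weight b f n = b ^ n / fact n * f n"

lemma poisson_weight_Suc:
  "real (Suc n) * poisson_weight b f (Suc n) = b * poisson_weight b (\<lambda>i. f (Suc i)) n"
  by (simp add: poisson_weight_def field_simps del: of_nat_Suc)

lemma poisson_weight_diff:
  "poisson_weight b (\<lambda>i. f i - g i) n = poisson_weight b f n - poisson_weight b g n"
  by (simp add: poisson_weight_def right_diff_distrib)

lemma poisson_weight_nonneg: "0 \<le> b \<Longrightarrow> 0 \<le> f n \<Longrightarrow> 0 \<le> poisson_weight b f n"
  by (simp add: poisson_weight_def)

lemma poisson_weight_admit_prod_Suc:
  "real (Suc n) * poisson_weight b (admit_prod N k) (Suc n)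
     = b * admit_level N k n * poisson_weight b (admit_prod N k) n"
  unfolding poisson_weight_Suc by (simp add: poisson_weight_def admit_prod_Suc)

definition conv_weight ::
    "real \<Rightarrow> real \<Rightarrow> (nat \<Rightarrow> real) \<Rightarrow> (nat \<Rightarrow> real) \<Rightarrow> nat \<Rightarrow> real" where
  "conv_weight b1 b2 f1 f2 m = (\<Sum>j\<le>m. poisson_weight b1 f1 j * poisson_weight b2 f2 (m - j))"

lemma conv_weight_commute: "conv_weight b1 b2 f1 f2 m = conv_weight b2 b1 f2 f1 m"
  unfolding conv_weight_def
  by (rule sum.reindex_bij_witness[where i="\<lambda>j. m - j" and j="\<lambda>j. m - j"]) auto

lemma conv_weight_pos:
  assumes "0 < b1" "0 < b2" "\<forall>i. 0 \<le> f1 i" "\<forall>i. 0 \<le> f2 i" "0 < f1 0" "0 < f2 m"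
  shows "0 < conv_weight b1 b2 f1 f2 m"
proof -
  have "0 < poisson_weight b1 f1 0 * poisson_weight b2 f2 (m - 0)"
    using assms by (simp add: poisson_weight_def)
  also have "\<dots> \<le> conv_weight b1 b2 f1 f2 m"
    unfolding conv_weight_def using assms
    by (intro member_le_sum mult_nonneg_nonneg poisson_weight_nonneg) auto
  finally show ?thesis .
qed

lemma conv_weight_Suc:
  "real (Suc m) * conv_weight b1 b2 f1 f2 (Suc m) =
     b1 * (\<Sum>j\<le>m. poisson_weight b1 (\<lambda>i. f1 (Suc i)) j * poisson_weight b2 f2 (m - j))
   + b2 * (\<Sum>j\<le>m. poisson_weight b1 f1 j * poisson_weight b2 (\<lambda>i. f2 (Suc i)) (m - j))"
proof -
  define u where "u j = poisson_weight b1 f1 j * poisson_weight b2 f2 (Suc m - j)" for j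
  have "real (Suc m) * conv_weight b1 b2 f1 f2 (Suc m)
      = (\<Sum>j\<le>Suc m. real j * u j) + (\<Sum>j\<le>Suc m. real (Suc m - j) * u j)"
    unfolding conv_weight_def sum_distrib_left u_def[symmetric] sum.distrib[symmetric]
    by (intro sum.cong refl) (simp add: of_nat_diff algebra_simps)
  also have "(\<Sum>j\<le>Suc m. real j * u j) = (\<Sum>j\<le>m. real (Suc j) * u (Suc j))"
    by (subst sum.atMost_Suc_shift) simp
  also have "\<dots> = b1 * (\<Sum>j\<le>m. poisson_weight b1 (\<lambda>i. f1 (Suc i)) j * poisson_weight b2 f2 (m - j))"
    unfolding sum_distrib_left u_def
    by (intro sum.cong refl) (simp add: mult.assoc[symmetric] poisson_weight_Suc del: of_nat_Suc)
  also have "(\<Sum>j\<le>Suc m. real (Suc m - j) * u j) = (\<Sum>j\<le>m. real (Suc (m - j)) * u j)"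
    by (subst sum.atMost_Suc) (simp add: Suc_diff_le del: of_nat_Suc)
  also have "\<dots> = b2 * (\<Sum>j\<le>m. poisson_weight b1 f1 j * poisson_weight b2 (\<lambda>i. f2 (Suc i)) (m - j))"
    unfolding sum_distrib_left u_def
    by (intro sum.cong refl)
       (simp add: Suc_diff_le mult.left_commute poisson_weight_Suc del: of_nat_Suc)
  finally show ?thesis .
qed

lemma conv_weight_deficit:
  "(b1 + b2) * conv_weight b1 b2 f1 f2 m - real (Suc m) * conv_weight b1 b2 f1 f2 (Suc m) =
     b1 * (\<Sum>j\<le>m. poisson_weight b1 (\<lambda>i. f1 i - f1 (Suc i)) j * poisson_weight b2 f2 (m - j))
   + b2 * (\<Sum>j\<le>m. poisson_weight b1 f1 j * poisson_weight b2 (\<lambda>i. f2 i - f2 (Suc i)) (m - j))"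
  unfolding conv_weight_Suc
  by (simp add: conv_weight_def poisson_weight_diff algebra_simps sum_subtractf sum.distrib
      sum_distrib_left)

lemma conv_weight_Suc_le:
  assumes "0 \<le> b1" "0 \<le> b2"
    and "\<forall>i. 0 \<le> f1 i" "\<forall>i. f1 (Suc i) \<le> f1 i" "\<forall>i. 0 \<le> f2 i" "\<forall>i. f2 (Suc i) \<le> f2 i"
  shows "real (Suc m) * conv_weight b1 b2 f1 f2 (Suc m) \<le> (b1 + b2) * conv_weight b1 b2 f1 f2 m"
proof -
  have "0 \<le> (\<Sum>j\<le>m. poisson_weight b1 (\<lambda>i. f1 i - f1 (Suc i)) j * poisson_weight b2 f2 (m - j))"
    "0 \<le> (\<Sum>j\<le>m. poisson_weight b1 f1 j * poisson_weight b2 (\<lambda>i. f2 i - f2 (Suc i)) (m - j))"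
    using assms by (auto intro!: sum_nonneg mult_nonneg_nonneg poisson_weight_nonneg)
  then show ?thesis using conv_weight_deficit[of b1 b2 f1 f2 m] assms(1,2)
    by (smt (verit) mult_nonneg_nonneg)
qed

lemma conv_weight_Suc_less:
  assumes "0 < b1" "0 < b2"
    and "\<forall>i. 0 \<le> f1 i" "\<forall>i. f1 (Suc i) \<le> f1 i" "\<forall>i. 0 \<le> f2 i" "\<forall>i. f2 (Suc i) \<le> f2 i"
    and "c \<le> m" "f1 (Suc c) < f1 c" "0 < f2 (m - c)"
  shows "real (Suc m) * conv_weight b1 b2 f1 f2 (Suc m) < (b1 + b2) * conv_weight b1 b2 f1 f2 m"
proof -
  let ?d1 = "\<lambda>j. poisson_weight b1 (\<lambda>i. f1 i - f1 (Suc i)) j * poisson_weight b2 f2 (m - j)"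
  let ?d2 = "\<lambda>j. poisson_weight b1 f1 j * poisson_weight b2 (\<lambda>i. f2 i - f2 (Suc i)) (m - j)"
  have "0 < ?d1 c"
    using assms by (simp add: poisson_weight_def)
  also have "\<dots> \<le> (\<Sum>j\<le>m. ?d1 j)"
    using assms by (intro member_le_sum mult_nonneg_nonneg poisson_weight_nonneg) auto
  finally have "0 < (\<Sum>j\<le>m. ?d1 j)" .
  moreover have "0 \<le> (\<Sum>j\<le>m. ?d2 j)"
    using assms by (auto intro!: sum_nonneg mult_nonneg_nonneg poisson_weight_nonneg)
  ultimately show ?thesis using conv_weight_deficit[of b1 b2 f1 f2 m] assms(1,2)
    by (smt (verit) mult_nonneg_nonneg mult_pos_pos)
qed

lemma conv_weight_Suc_eq:
  assumes "\<forall>i\<le>Suc m. f1 i = 1" "\<forall>i\<le>Suc m. f2 i = 1"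
  shows "real (Suc m) * conv_weight b1 b2 f1 f2 (Suc m) = (b1 + b2) * conv_weight b1 b2 f1 f2 m"
  using conv_weight_deficit[of b1 b2 f1 f2 m] assms by (simp add: poisson_weight_def)

section \<open>A strict Chebyshev inequality for means\<close>

lemma weighted_chebyshev_sum_less:
  fixes G r :: "nat \<Rightarrow> real"
  assumes G: "\<forall>m\<le>n. 0 < G m" and r: "\<forall>i j. i \<le> j \<longrightarrow> j \<le> n \<longrightarrow> r j \<le> r i"
    and strict: "r n < r (n - 1)" and "0 < n"
  shows "(\<Sum>m\<le>n. real m * (G m * r m)) * (\<Sum>m\<le>n. G m)
       < (\<Sum>m\<le>n. real m * G m) * (\<Sum>m\<le>n. G m * r m)"
proof -
  define t where "t i j = G i * G j * ((real i - real j) * (r i - r j))" for i j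
  have t_nonpos: "t i j \<le> 0" if "i \<le> n" "j \<le> n" for i j
  proof -
    have "(real i - real j) * (r i - r j) \<le> 0"
      using r that by (cases "i \<le> j") (auto simp: mult_le_0_iff)
    moreover have "0 \<le> G i * G j" using G that by (simp add: less_imp_le)
    ultimately show ?thesis unfolding t_def by (simp add: mult_nonneg_nonpos)
  qed
  have "t n (n - 1) < 0"
    using G strict \<open>0 < n\<close> by (simp add: t_def of_nat_diff mult_pos_neg)
  then have "(\<Sum>j\<le>n. t n j) < (\<Sum>j\<le>n. 0)"
    using t_nonpos by (intro sum_strict_mono_strong[of _ "n - 1"]) auto
  then have "(\<Sum>i\<le>n. \<Sum>j\<le>n. t i j) < (\<Sum>i\<le>n. 0)"
    using t_nonpos by (intro sum_strict_mono_strong[of _ n]) (auto intro: sum_nonpos)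
  moreover have "(\<Sum>i\<le>n. \<Sum>j\<le>n. t i j) =
      (\<Sum>m\<le>n. real m * (G m * r m)) * (\<Sum>m\<le>n. G m)
    - (\<Sum>m\<le>n. real m * G m) * (\<Sum>m\<le>n. G m * r m)
    - (\<Sum>m\<le>n. G m * r m) * (\<Sum>m\<le>n. real m * G m)
    + (\<Sum>m\<le>n. G m) * (\<Sum>m\<le>n. real m * (G m * r m))"
  proof -
    have "t i j = real i * (G i * r i) * G j - real i * G i * (G j * r j)
        - G i * r i * (real j * G j) + G i * (real j * (G j * r j))" for i j
      by (simp add: t_def algebra_simps)
    then show ?thesis unfolding sum_product by (simp add: sum_subtractf sum.distrib)
  qed
  ultimately show ?thesis by (simp add: mult.commute)
qed

lemma mean_less_of_Suc_ratio:
  fixes G W :: "nat \<Rightarrow> real"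
  assumes G_pos: "\<forall>m\<le>n. 0 < G m"
    and G_Suc: "\<forall>m<n. real (Suc m) * G (Suc m) = a * G m"
    and W_Suc: "\<forall>m<n. real (Suc m) * W (Suc m) \<le> a * W m"
    and W_Suc_less: "real n * W n < a * W (n - 1)" and "0 < n"
  shows "(\<Sum>m\<le>n. real m * W m) * (\<Sum>m\<le>n. G m) < (\<Sum>m\<le>n. real m * G m) * (\<Sum>m\<le>n. W m)"
proof -
  define r where "r m = W m / G m" for m
  have r_diff: "r (Suc m) - r m
      = (real (Suc m) * W (Suc m) - a * W m) / (real (Suc m) * G (Suc m))"
    if "m < n" for m
  proof -
    have "0 < G m" "0 < G (Suc m)" using G_pos that by auto
    moreover have "a * G m = real (Suc m) * G (Suc m)" using G_Suc that by simp
    ultimately show ?thesis unfolding r_def by (simp add: field_simps del: of_nat_Suc)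
  qed
  have "r (Suc m) \<le> r m" if "m \<in> {..<n}" for m
  proof -
    have "(real (Suc m) * W (Suc m) - a * W m) / (real (Suc m) * G (Suc m)) \<le> 0"
      using W_Suc G_pos that by (intro divide_nonpos_pos) auto
    then show ?thesis using r_diff that by fastforce
  qed
  then have "\<forall>i j. i \<le> j \<longrightarrow> j \<le> n \<longrightarrow> r j \<le> r i"
    by (auto intro: lift_Suc_antimono_le_ivl)
  moreover have "r n < r (n - 1)"
  proof -
    have "(real n * W n - a * W (n - 1)) / (real n * G n) < 0"
      using W_Suc_less G_pos \<open>0 < n\<close> by (intro divide_neg_pos) auto
    then show ?thesis using r_diff[of "n - 1"] \<open>0 < n\<close> by simp
  qed
  ultimately have "(\<Sum>m\<le>n. real m * (G m * r m)) * (\<Sum>m\<le>n. G m)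
      < (\<Sum>m\<le>n. real m * G m) * (\<Sum>m\<le>n. G m * r m)"
    using G_pos \<open>0 < n\<close> by (intro weighted_chebyshev_sum_less)
  moreover have "G m * r m = W m" if "m \<le> n" for m
    using G_pos that by (simp add: r_def order_less_imp_not_eq2)
  ultimately show ?thesis by simp
qed

lemma finite_bo_states: "finite (bo_states N1 N2)"
proof -
  have "bo_states N1 N2 \<subseteq> {..N1 + N2} \<times> {..N1 + N2}" by (auto simp: bo_states_def)
  then show ?thesis by (rule finite_subset) auto
qed

lemma sum_bo_states: "(\<Sum>s\<in>bo_states N1 N2. f s) = (\<Sum>m\<le>N1 + N2. \<Sum>j\<le>m. f (j, m - j))"
  unfolding bo_states_def using sum.triangle_reindex_eq[of "\<lambda>i j. f (i, j)"]
  by (simp add: case_prod_beta')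

lemma sum_reindex_shift:
  assumes "finite S" "inj_on f S"
    and "\<forall>s\<in>S. f s \<notin> S \<longrightarrow> g (f s) = 0" and "\<forall>t\<in>S - f ` S. g t = 0"
  shows "(\<Sum>s\<in>S. g (f s)) = (\<Sum>t\<in>S. g t)"
proof -
  have "(\<Sum>s\<in>S. g (f s)) = (\<Sum>t\<in>f ` S. g t)"
    using sum.reindex[OF assms(2), of g] by (simp add: comp_def)
  also have "\<dots> = (\<Sum>t\<in>f ` S \<inter> S. g t)"
    using assms by (intro sum.mono_neutral_right) auto
  also have "\<dots> = (\<Sum>t\<in>S. g t)"
    using assms by (intro sum.mono_neutral_left) auto
  finally show ?thesis .
qed

lemma sum_bo_states_shift1:
  assumes "\<forall>t. fst t = 0 \<longrightarrow> g t = 0" and "\<forall>t. t \<notin> bo_states N1 N2 \<longrightarrow> g t = 0"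
  shows "(\<Sum>s\<in>bo_states N1 N2. g (Suc (fst s), snd s)) = (\<Sum>t\<in>bo_states N1 N2. g t)"
proof (rule sum_reindex_shift[OF finite_bo_states, where f="\<lambda>s. (Suc (fst s), snd s)"])
  show "\<forall>t\<in>bo_states N1 N2 - (\<lambda>s. (Suc (fst s), snd s)) ` bo_states N1 N2. g t = 0"
  proof
    fix t assume t: "t \<in> bo_states N1 N2 - (\<lambda>s. (Suc (fst s), snd s)) ` bo_states N1 N2"
    have "t \<in> (\<lambda>s. (Suc (fst s), snd s)) ` bo_states N1 N2" if "fst t \<noteq> 0"
      using that t by (intro image_eqI[of _ _ "(fst t - 1, snd t)"]) (auto simp: bo_states_def)
    then show "g t = 0" using t assms(1) by blast
  qed
qed (use assms(2) in \<open>auto simp: inj_on_def\<close>)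

lemma sum_bo_states_shift2:
  assumes "\<forall>t. snd t = 0 \<longrightarrow> g t = 0" and "\<forall>t. t \<notin> bo_states N1 N2 \<longrightarrow> g t = 0"
  shows "(\<Sum>s\<in>bo_states N1 N2. g (fst s, Suc (snd s))) = (\<Sum>t\<in>bo_states N1 N2. g t)"
proof (rule sum_reindex_shift[OF finite_bo_states, where f="\<lambda>s. (fst s, Suc (snd s))"])
  show "\<forall>t\<in>bo_states N1 N2 - (\<lambda>s. (fst s, Suc (snd s))) ` bo_states N1 N2. g t = 0"
  proof
    fix t assume t: "t \<in> bo_states N1 N2 - (\<lambda>s. (fst s, Suc (snd s))) ` bo_states N1 N2"
    have "t \<in> (\<lambda>s. (fst s, Suc (snd s))) ` bo_states N1 N2" if "snd t \<noteq> 0"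
      using that t by (intro image_eqI[of _ _ "(fst t, snd t - 1)"]) (auto simp: bo_states_def)
    then show "g t = 0" using t assms(1) by blast
  qed
qed (use assms(2) in \<open>auto simp: inj_on_def\<close>)

lemma util_obj_eq:
  "util_obj N1 N2 l1 l2 m1 m2 x =
     (l1 * B1 N1 N2 l1 l2 m1 m2 x + l2 * B2 N1 N2 l1 l2 m1 m2 x) / (l1 + l2)"
  by (simp add: util_obj_def add_divide_distrib)

section \<open>The bounded overflow model with fixed parameters\<close>

locale bounded_overflow =
  fixes N1 N2 :: nat and l1 l2 m1 m2 k1 k2 :: real
  assumes l1_pos: "0 < l1" and l2_pos: "0 < l2" and m1_pos: "0 < m1" and m2_pos: "0 < m2"
begin

abbreviation S where "S \<equiv> bo_states N1 N2"
abbreviation q where "q \<equiv> bo_rate N1 N2 l1 l2 m1 m2 k1 k2"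

definition admit1 :: "nat \<times> nat \<Rightarrow> real" where
  "admit1 s = adm N1 k2 (fst s) (fst s + snd s) (N1 + N2)"

definition admit2 :: "nat \<times> nat \<Rightarrow> real" where
  "admit2 s = adm N2 k1 (snd s) (fst s + snd s) (N1 + N2)"

lemma admit1_nonneg: "0 \<le> admit1 s"
  by (simp add: admit1_def adm_eq_admit_level admit_level_nonneg)

lemma admit2_nonneg: "0 \<le> admit2 s"
  by (simp add: admit2_def adm_eq_admit_level admit_level_nonneg)

lemma rate_eq: "q (n1, n2) t =
   (if t = (Suc n1, n2) then l1 * admit1 (n1, n2) else 0) +
   (if t = (n1, Suc n2) then l2 * admit2 (n1, n2) else 0) +
   (if 0 < n1 \<and> t = (n1 - 1, n2) then real n1 * m1 else 0) +
   (if 0 < n2 \<and> t = (n1, n2 - 1) then real n2 * m2 else 0)"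
  by (auto simp: bo_rate_def admit1_def admit2_def)

lemma rate_up1 [simp]: "q (n1, n2) (Suc n1, n2) = l1 * admit1 (n1, n2)"
  by (auto simp: rate_eq)

lemma rate_up2 [simp]: "q (n1, n2) (n1, Suc n2) = l2 * admit2 (n1, n2)"
  by (auto simp: rate_eq)

lemma rate_down1 [simp]: "q (Suc n1, n2) (n1, n2) = real (Suc n1) * m1"
  by (auto simp: rate_eq)

lemma rate_down2 [simp]: "q (n1, Suc n2) (n1, n2) = real (Suc n2) * m2"
  by (auto simp: rate_eq)

lemma rate_nonneg: "0 \<le> q s t"
  using l1_pos l2_pos m1_pos m2_pos admit1_nonneg[of s] admit2_nonneg[of s]
  by (cases s) (simp add: rate_eq)

definition a1 :: real where "a1 = l1 / m1"
definition a2 :: real where "a2 = l2 / m2"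

lemma a1_pos: "0 < a1" using l1_pos m1_pos by (simp add: a1_def)
lemma a2_pos: "0 < a2" using l2_pos m2_pos by (simp add: a2_def)

definition weight :: "nat \<times> nat \<Rightarrow> real" where
  "weight s = (if s \<in> S then poisson_weight a1 (admit_prod N1 k2) (fst s) *
                             poisson_weight a2 (admit_prod N2 k1) (snd s) else 0)"

definition normalizer :: real where "normalizer = (\<Sum>s\<in>S. weight s)"

definition prod_form :: "nat \<times> nat \<Rightarrow> real" where
  "prod_form s = weight s / normalizer"

lemma weight_nonneg: "0 \<le> weight s"
  using a1_pos a2_pos by (simp add: weight_def poisson_weight_nonneg admit_prod_nonneg)

lemma normalizer_pos: "0 < normalizer"
proof -
  have "1 = weight (0, 0)" by (simp add: weight_def bo_states_def poisson_weight_def admit_prod_def)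
  also have "\<dots> \<le> normalizer" unfolding normalizer_def
    using finite_bo_states weight_nonneg by (intro member_le_sum) (auto simp: bo_states_def)
  finally show ?thesis by simp
qed

lemma prod_form_nonneg: "0 \<le> prod_form s"
  using weight_nonneg normalizer_pos by (simp add: prod_form_def)

lemma prod_form_outside: "s \<notin> S \<Longrightarrow> prod_form s = 0"
  by (simp add: prod_form_def weight_def)

lemma sum_prod_form: "(\<Sum>s\<in>S. prod_form s) = 1"
  using normalizer_pos by (simp add: prod_form_def normalizer_def sum_divide_distrib[symmetric])

lemma prod_form_origin_pos: "0 < prod_form (0, 0)"
  using normalizer_pos
  by (simp add: prod_form_def weight_def bo_states_def poisson_weight_def admit_prod_def)

lemma one_minus_sum_prod_form:
  "1 - (\<Sum>s\<in>S. prod_form s * f s) = (\<Sum>s\<in>S. weight s * (1 - f s)) / normalizer"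
  using normalizer_pos by (simp add: prod_form_def sum_divide_distrib[symmetric]
      right_diff_distrib sum_subtractf normalizer_def[symmetric] field_simps)

lemma prod_form_balance1:
  "prod_form (Suc n1, n2) * (real (Suc n1) * m1) = prod_form (n1, n2) * (l1 * admit1 (n1, n2))"
proof (cases "n1 + n2 < N1 + N2")
  case True
  have "a1 * m1 = l1" using m1_pos by (simp add: a1_def)
  then have "weight (Suc n1, n2) * (real (Suc n1) * m1) = weight (n1, n2) * (l1 * admit1 (n1, n2))"
    using True poisson_weight_admit_prod_Suc[of n1 a1 N1 k2]
    by (simp add: weight_def bo_states_def admit1_def adm_eq_admit_level algebra_simps
        del: of_nat_Suc)
  then show ?thesis by (simp add: prod_form_def field_simps)
qed (simp add: prod_form_outside bo_states_def admit1_def adm_def)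

lemma prod_form_balance2:
  "prod_form (n1, Suc n2) * (real (Suc n2) * m2) = prod_form (n1, n2) * (l2 * admit2 (n1, n2))"
proof (cases "n1 + n2 < N1 + N2")
  case True
  have "a2 * m2 = l2" using m2_pos by (simp add: a2_def)
  then have "weight (n1, Suc n2) * (real (Suc n2) * m2) = weight (n1, n2) * (l2 * admit2 (n1, n2))"
    using True poisson_weight_admit_prod_Suc[of n2 a2 N2 k1]
    by (simp add: weight_def bo_states_def admit2_def adm_eq_admit_level algebra_simps
        del: of_nat_Suc)
  then show ?thesis by (simp add: prod_form_def field_simps)
qed (simp add: prod_form_outside bo_states_def admit2_def adm_def)

lemma prod_form_detailed_balance: "detailed_balance S q prod_form"
  unfolding detailed_balance_def
proof (intro ballI)
  fix s t :: "nat \<times> nat"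
  obtain n1 n2 a b where st: "s = (n1, n2)" "t = (a, b)" by (cases s, cases t)
  consider "t = (Suc n1, n2)" | "t = (n1, Suc n2)" | "s = (Suc a, b)" | "s = (a, Suc b)"
    | "t \<noteq> (Suc n1, n2)" "t \<noteq> (n1, Suc n2)" "s \<noteq> (Suc a, b)" "s \<noteq> (a, Suc b)"
    by blast
  then show "prod_form s * q s t = prod_form t * q t s"
  proof cases
    case 1 then show ?thesis using prod_form_balance1[of n1 n2] by (simp add: st)
  next
    case 2 then show ?thesis using prod_form_balance2[of n1 n2] by (simp add: st)
  next
    case 3 then show ?thesis using prod_form_balance1[of a b] by (simp add: st)
  next
    case 4 then show ?thesis using prod_form_balance2[of a b] by (simp add: st)
  next
    case 5
    have "q s t = 0" using 5 unfolding st rate_eq by (cases n1; cases n2) auto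
    moreover have "q t s = 0" using 5 unfolding st rate_eq by (cases a; cases b) auto
    ultimately show ?thesis by simp
  qed
qed

lemma bo_stationary_iff: "bo_stationary N1 N2 l1 l2 m1 m2 k1 k2 p \<longleftrightarrow>
    (\<forall>s. s \<notin> S \<longrightarrow> p s = 0) \<and> (\<forall>s\<in>S. 0 \<le> p s) \<and> (\<Sum>s\<in>S. p s) = 1 \<and>
    global_balance S q p"
  by (simp add: bo_stationary_def global_balance_def)

lemma prod_form_stationary: "bo_stationary N1 N2 l1 l2 m1 m2 k1 k2 prod_form"
  unfolding bo_stationary_iff
  using prod_form_outside prod_form_nonneg sum_prod_form
    detailed_balance_imp_global_balance[OF prod_form_detailed_balance] by blast

(* Once admit_level N1 k2 j = 0 nothing enters {n1 > j}, while calls of P_1 still leave it. *)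
lemma stationary_vanishes_above1:
  assumes stat: "bo_stationary N1 N2 l1 l2 m1 m2 k1 k2 p" and j: "admit_level N1 k2 j = 0"
  shows "p (Suc j, n2) = 0"
proof (cases "(Suc j, n2) \<in> S")
  case True
  define A where "A = {t\<in>S. j < fst t}"
  have A_no_inflow: "\<forall>u\<in>A. \<forall>t\<in>S - A. q t u = 0"
  proof (intro ballI)
    fix u t assume "u \<in> A" "t \<in> S - A"
    then obtain a b c d where t: "t = (a, b)" "a \<le> j" and u: "u = (c, d)" "j < c"
      by (cases t, cases u) (auto simp: A_def)
    have "admit1 t = 0" if "c = Suc a"
    proof -
      have "a = j" using that t(2) u(2) by linarith
      then show ?thesis using t j by (simp add: admit1_def adm_eq_admit_level)
    qed
    then show "q t u = 0" using t u by (auto simp: rate_eq)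
  qed
  have "p (Suc j, n2) * q (Suc j, n2) (j, n2) = 0"
    using stat True rate_nonneg
    by (intro global_balance_no_inflow[OF finite_bo_states _ _ _ _ A_no_inflow])
       (auto simp: bo_stationary_iff A_def bo_states_def)
  then show ?thesis using m1_pos by simp
qed (use stat in \<open>simp add: bo_stationary_iff\<close>)

lemma stationary_vanishes_above2:
  assumes stat: "bo_stationary N1 N2 l1 l2 m1 m2 k1 k2 p" and j: "admit_level N2 k1 j = 0"
  shows "p (n1, Suc j) = 0"
proof (cases "(n1, Suc j) \<in> S")
  case True
  define A where "A = {t\<in>S. j < snd t}"
  have A_no_inflow: "\<forall>u\<in>A. \<forall>t\<in>S - A. q t u = 0"
  proof (intro ballI)
    fix u t assume "u \<in> A" "t \<in> S - A"
    then obtain a b c d where t: "t = (a, b)" "b \<le> j" and u: "u = (c, d)" "j < d"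
      by (cases t, cases u) (auto simp: A_def)
    have "admit2 t = 0" if "d = Suc b"
    proof -
      have "b = j" using that t(2) u(2) by linarith
      then show ?thesis using t j by (simp add: admit2_def adm_eq_admit_level)
    qed
    then show "q t u = 0" using t u by (auto simp: rate_eq)
  qed
  have "p (n1, Suc j) * q (n1, Suc j) (n1, j) = 0"
    using stat True rate_nonneg
    by (intro global_balance_no_inflow[OF finite_bo_states _ _ _ _ A_no_inflow])
       (auto simp: bo_stationary_iff A_def bo_states_def)
  then show ?thesis using m2_pos by simp
qed (use stat in \<open>simp add: bo_stationary_iff\<close>)

lemma stationary_vanishes_off_support:
  assumes stat: "bo_stationary N1 N2 l1 l2 m1 m2 k1 k2 p" and "s \<in> S" "prod_form s = 0"
  shows "p s = 0"
proof -
  obtain n1 n2 where s: "s = (n1, n2)" by (cases s)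
  have "weight s = 0" using assms(3) normalizer_pos by (simp add: prod_form_def)
  then have "admit_prod N1 k2 n1 = 0 \<or> admit_prod N2 k1 n2 = 0"
    using assms(2) s a1_pos a2_pos by (simp add: weight_def poisson_weight_def)
  then show ?thesis
    using stationary_vanishes_above1[OF stat] stationary_vanishes_above2[OF stat]
    by (auto simp: s admit_prod_eq_0_iff gr0_conv_Suc)
qed

lemma rate_graph_down1: "(n1, n2) \<in> S \<Longrightarrow> ((n1, n2), (0, n2)) \<in> (rate_graph S q)\<^sup>*"
proof (induction n1)
  case (Suc n)
  have "((Suc n, n2), (n, n2)) \<in> rate_graph S q"
    using Suc.prems m1_pos by (simp add: rate_graph_def bo_states_def)
  moreover have "((n, n2), (0, n2)) \<in> (rate_graph S q)\<^sup>*"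
    using Suc by (simp add: bo_states_def)
  ultimately show ?case by (rule converse_rtrancl_into_rtrancl)
qed simp

lemma rate_graph_down2: "(0, n2) \<in> S \<Longrightarrow> ((0, n2), (0, 0)) \<in> (rate_graph S q)\<^sup>*"
proof (induction n2)
  case (Suc n)
  have "((0, Suc n), (0, n)) \<in> rate_graph S q"
    using Suc.prems m2_pos by (simp add: rate_graph_def bo_states_def)
  moreover have "((0, n), (0, 0)) \<in> (rate_graph S q)\<^sup>*"
    using Suc by (simp add: bo_states_def)
  ultimately show ?case by (rule converse_rtrancl_into_rtrancl)
qed simp

lemma rate_graph_to_origin: "s \<in> S \<Longrightarrow> (s, (0, 0)) \<in> (rate_graph S q)\<^sup>*"
  using rate_graph_down1[of "fst s" "snd s"] rate_graph_down2[of "snd s"]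
  by (auto simp: bo_states_def)

lemma stationary_eq_prod_form:
  assumes stat: "bo_stationary N1 N2 l1 l2 m1 m2 k1 k2 p"
  shows "p = prod_form"
proof -
  interpret chain: reversible_chain S q prod_form
    using finite_bo_states rate_nonneg prod_form_detailed_balance prod_form_nonneg
    by unfold_locales
  define c where "c = p (0, 0) / prod_form (0, 0)"
  have "\<forall>s\<in>S. p s = c * prod_form s"
    unfolding c_def
  proof (rule chain.balanced_proportional)
    show "global_balance S q p" using stat by (simp add: bo_stationary_iff)
    show "\<forall>s\<in>S. prod_form s = 0 \<longrightarrow> p s = 0"
      using stationary_vanishes_off_support[OF stat] by blast
    show "(0, 0) \<in> S" by (simp add: bo_states_def)
  qed (use prod_form_origin_pos rate_graph_to_origin in auto)
  moreover have "c = 1"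
  proof -
    have "1 = (\<Sum>s\<in>S. c * prod_form s)"
      using stat calculation by (simp add: bo_stationary_iff)
    then show ?thesis by (simp add: sum_distrib_left[symmetric] sum_prod_form)
  qed
  ultimately show ?thesis
    using stat prod_form_outside by (auto simp: bo_stationary_iff fun_eq_iff)
qed

lemma bo_pi_eq_prod_form: "bo_pi N1 N2 l1 l2 m1 m2 k1 k2 = prod_form"
  unfolding bo_pi_def using prod_form_stationary stationary_eq_prod_form by (rule the_equality)

lemma B1_eq:
  assumes "k1 = fst x * real N1" "k2 = snd x * real N2"
  shows "B1 N1 N2 l1 l2 m1 m2 x = 1 - (\<Sum>s\<in>S. prod_form s * admit1 s)"
  unfolding B1_def Let_def assms[symmetric] bo_pi_eq_prod_form admit1_def[symmetric]
  by (simp add: right_diff_distrib sum_subtractf sum_prod_form)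

lemma B2_eq:
  assumes "k1 = fst x * real N1" "k2 = snd x * real N2"
  shows "B2 N1 N2 l1 l2 m1 m2 x = 1 - (\<Sum>s\<in>S. prod_form s * admit2 s)"
  unfolding B2_def Let_def assms[symmetric] bo_pi_eq_prod_form admit2_def[symmetric]
  by (simp add: right_diff_distrib sum_subtractf sum_prod_form)

lemma throughput1:
  "l1 * (\<Sum>s\<in>S. prod_form s * admit1 s) = m1 * (\<Sum>s\<in>S. real (fst s) * prod_form s)"
proof -
  have "l1 * (\<Sum>s\<in>S. prod_form s * admit1 s)
      = (\<Sum>s\<in>S. prod_form (Suc (fst s), snd s) * (real (Suc (fst s)) * m1))"
    unfolding sum_distrib_left
  proof (intro sum.cong refl)
    fix s :: "nat \<times> nat"
    show "l1 * (prod_form s * admit1 s)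
        = prod_form (Suc (fst s), snd s) * (real (Suc (fst s)) * m1)"
      using prod_form_balance1[of "fst s" "snd s"] by (simp add: mult_ac del: of_nat_Suc)
  qed
  also have "\<dots> = (\<Sum>s\<in>S. prod_form s * (real (fst s) * m1))"
    using sum_bo_states_shift1[of "\<lambda>s. prod_form s * (real (fst s) * m1)" N1 N2]
    by (simp add: prod_form_outside)
  finally show ?thesis by (simp add: sum_distrib_left mult_ac)
qed

lemma throughput2:
  "l2 * (\<Sum>s\<in>S. prod_form s * admit2 s) = m2 * (\<Sum>s\<in>S. real (snd s) * prod_form s)"
proof -
  have "l2 * (\<Sum>s\<in>S. prod_form s * admit2 s)
      = (\<Sum>s\<in>S. prod_form (fst s, Suc (snd s)) * (real (Suc (snd s)) * m2))"
    unfolding sum_distrib_left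
  proof (intro sum.cong refl)
    fix s :: "nat \<times> nat"
    show "l2 * (prod_form s * admit2 s)
        = prod_form (fst s, Suc (snd s)) * (real (Suc (snd s)) * m2)"
      using prod_form_balance2[of "fst s" "snd s"] by (simp add: mult_ac del: of_nat_Suc)
  qed
  also have "\<dots> = (\<Sum>s\<in>S. prod_form s * (real (snd s) * m2))"
    using sum_bo_states_shift2[of "\<lambda>s. prod_form s * (real (snd s) * m2)" N1 N2]
    by (simp add: prod_form_outside)
  finally show ?thesis by (simp add: sum_distrib_left mult_ac)
qed

definition mean_total :: real where
  "mean_total = (\<Sum>s\<in>S. real (fst s + snd s) * prod_form s)"

lemma util_obj_eq_mean_total:
  assumes "k1 = fst x * real N1" "k2 = snd x * real N2" "m1 = m2"
  shows "util_obj N1 N2 l1 l2 m1 m2 x = 1 - m1 * mean_total / (l1 + l2)"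
proof -
  have "l1 * B1 N1 N2 l1 l2 m1 m2 x + l2 * B2 N1 N2 l1 l2 m1 m2 x = (l1 + l2) - m1 * mean_total"
    unfolding B1_eq[OF assms(1,2)] B2_eq[OF assms(1,2)] right_diff_distrib throughput1 throughput2
      mean_total_def
    using assms(3) by (simp add: algebra_simps sum.distrib)
  then show ?thesis using l1_pos l2_pos by (simp add: util_obj_eq diff_divide_distrib)
qed

definition level_weight :: "nat \<Rightarrow> real" where
  "level_weight m = conv_weight a1 a2 (admit_prod N1 k2) (admit_prod N2 k1) m"

lemma sum_weight_level: "m \<le> N1 + N2 \<Longrightarrow> (\<Sum>j\<le>m. weight (j, m - j)) = level_weight m"
  unfolding level_weight_def conv_weight_def
  by (intro sum.cong refl) (auto simp: weight_def bo_states_def)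

lemma normalizer_eq: "normalizer = (\<Sum>m\<le>N1 + N2. level_weight m)"
  unfolding normalizer_def sum_bo_states by (intro sum.cong refl) (simp add: sum_weight_level)

lemma mean_total_eq:
  "mean_total = (\<Sum>m\<le>N1 + N2. real m * level_weight m) / (\<Sum>m\<le>N1 + N2. level_weight m)"
proof -
  have "(\<Sum>j\<le>m. real (j + (m - j)) * weight (j, m - j)) = real m * level_weight m"
    if "m \<le> N1 + N2" for m
    unfolding sum_weight_level[OF that, symmetric] sum_distrib_left by (intro sum.cong refl) auto
  then have "mean_total * normalizer = (\<Sum>m\<le>N1 + N2. real m * level_weight m)"
    unfolding mean_total_def prod_form_def sum_distrib_right sum_bo_states
    using normalizer_pos by simp
  then show ?thesis using normalizer_pos normalizer_eq by (simp add: field_simps)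
qed

lemma level_weight_Suc_le: "real (Suc m) * level_weight (Suc m) \<le> (a1 + a2) * level_weight m"
  unfolding level_weight_def using a1_pos a2_pos
  by (intro conv_weight_Suc_le) (auto simp: admit_prod_nonneg admit_prod_Suc_le)

lemma level_weight_Suc_less:
  assumes "nat \<lfloor>k1\<rfloor> < N1 \<or> nat \<lfloor>k2\<rfloor> < N2"
  shows "real (N1 + N2) * level_weight (N1 + N2) < (a1 + a2) * level_weight (N1 + N2 - 1)"
  using assms
proof
  assume k1: "nat \<lfloor>k1\<rfloor> < N1"
  have "real (Suc (N1 + N2 - 1))
        * conv_weight a2 a1 (admit_prod N2 k1) (admit_prod N1 k2) (Suc (N1 + N2 - 1))
      < (a2 + a1) * conv_weight a2 a1 (admit_prod N2 k1) (admit_prod N1 k2) (N1 + N2 - 1)"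
    using a1_pos a2_pos k1 admit_prod_drop[of N2 k1]
    by (intro conv_weight_Suc_less[where c = "N2 + nat \<lfloor>k1\<rfloor>"])
       (auto simp: admit_prod_nonneg admit_prod_Suc_le admit_prod_eq_1)
  then show ?thesis using k1 by (simp add: level_weight_def conv_weight_commute add.commute)
next
  assume k2: "nat \<lfloor>k2\<rfloor> < N2"
  have "real (Suc (N1 + N2 - 1)) * level_weight (Suc (N1 + N2 - 1))
      < (a1 + a2) * level_weight (N1 + N2 - 1)"
    unfolding level_weight_def using a1_pos a2_pos k2 admit_prod_drop[of N1 k2]
    by (intro conv_weight_Suc_less[where c = "N1 + nat \<lfloor>k2\<rfloor>"])
       (auto simp: admit_prod_nonneg admit_prod_Suc_le admit_prod_eq_1)
  then show ?thesis using k2 by simp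
qed

lemma level_weight_full_sharing_Suc:
  assumes "k1 = real N1" "k2 = real N2" "m < N1 + N2"
  shows "real (Suc m) * level_weight (Suc m) = (a1 + a2) * level_weight m"
  unfolding level_weight_def using assms by (intro conv_weight_Suc_eq) (auto simp: admit_prod_eq_1)

lemma level_weight_full_sharing_pos:
  assumes "k1 = real N1" "m \<le> N1 + N2"
  shows "0 < level_weight m"
  unfolding level_weight_def using assms a1_pos a2_pos
  by (intro conv_weight_pos) (auto simp: admit_prod_nonneg admit_prod_eq_1)

lemma mean_total_less_full_sharing:
  assumes "nat \<lfloor>k1\<rfloor> < N1 \<or> nat \<lfloor>k2\<rfloor> < N2"
  shows "mean_total < bounded_overflow.mean_total N1 N2 l1 l2 m1 m2 (real N1) (real N2)"
proof -
  interpret full: bounded_overflow N1 N2 l1 l2 m1 m2 "real N1" "real N2"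
    using l1_pos l2_pos m1_pos m2_pos by unfold_locales
  define n where "n = N1 + N2"
  have "0 < n" using assms by (auto simp: n_def)
  have "(\<Sum>m\<le>n. real m * level_weight m) * (\<Sum>m\<le>n. full.level_weight m)
      < (\<Sum>m\<le>n. real m * full.level_weight m) * (\<Sum>m\<le>n. level_weight m)"
    using \<open>0 < n\<close> level_weight_Suc_le level_weight_Suc_less[OF assms]
      full.level_weight_full_sharing_pos full.level_weight_full_sharing_Suc
    by (intro mean_less_of_Suc_ratio[where a = "a1 + a2"]) (auto simp: n_def)
  moreover have "0 < (\<Sum>m\<le>n. level_weight m)" "0 < (\<Sum>m\<le>n. full.level_weight m)"
    using normalizer_pos full.normalizer_pos
    by (simp_all add: n_def normalizer_eq full.normalizer_eq)
  ultimately show ?thesis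
    unfolding mean_total_eq full.mean_total_eq n_def[symmetric] by (simp add: field_simps)
qed

lemma sum_weight_no_borrowing:
  assumes "k1 = 0" "k2 = 0"
  shows "(\<Sum>s\<in>S. weight s * g s) =
    (\<Sum>n1\<le>N1. \<Sum>n2\<le>N2. a1 ^ n1 / fact n1 * (a2 ^ n2 / fact n2) * g (n1, n2))"
proof -
  have weight: "weight (n1, n2) =
      (if n1 \<le> N1 \<and> n2 \<le> N2 then a1 ^ n1 / fact n1 * (a2 ^ n2 / fact n2) else 0)" for n1 n2
    unfolding weight_def using assms
    by (auto simp: bo_states_def poisson_weight_def admit_prod_no_borrowing)
  have "{..N1} \<times> {..N2} \<subseteq> S" by (auto simp: bo_states_def)
  then have "(\<Sum>s\<in>S. weight s * g s) = (\<Sum>s\<in>{..N1} \<times> {..N2}. weight s * g s)"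
    by (intro sum.mono_neutral_right[OF finite_bo_states]) (auto simp: weight split: if_splits)
  also have "\<dots> = (\<Sum>(n1, n2)\<in>{..N1} \<times> {..N2}.
      a1 ^ n1 / fact n1 * (a2 ^ n2 / fact n2) * g (n1, n2))"
    by (intro sum.cong refl) (auto simp: weight)
  finally show ?thesis by (simp add: sum.cartesian_product)
qed

lemma normalizer_no_borrowing:
  assumes "k1 = 0" "k2 = 0"
  shows "normalizer = (\<Sum>n\<le>N1. a1 ^ n / fact n) * (\<Sum>n\<le>N2. a2 ^ n / fact n)"
  using sum_weight_no_borrowing[OF assms, of "\<lambda>_. 1"] by (simp add: normalizer_def sum_product)

lemma blocking1_no_borrowing:
  assumes "k1 = 0" "k2 = 0"
  shows "1 - (\<Sum>s\<in>S. prod_form s * admit1 s) = erlangB N1 a1"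
proof -
  have "a1 ^ n1 / fact n1 * (a2 ^ n2 / fact n2) * (1 - admit1 (n1, n2))
      = (if n1 = N1 then a1 ^ N1 / fact N1 * (a2 ^ n2 / fact n2) else 0)"
    if "n1 \<le> N1" "n2 \<le> N2" for n1 n2
    unfolding admit1_def using that assms by (auto simp: adm_eq_admit_level admit_level_def)
  then have "(\<Sum>s\<in>S. weight s * (1 - admit1 s))
      = (\<Sum>n1\<le>N1. \<Sum>n2\<le>N2. if n1 = N1 then a1 ^ N1 / fact N1 * (a2 ^ n2 / fact n2) else 0)"
    unfolding sum_weight_no_borrowing[OF assms] by (intro sum.cong refl) auto
  also have "\<dots> = a1 ^ N1 / fact N1 * (\<Sum>n\<le>N2. a2 ^ n / fact n)"
    by (subst sum.swap) (simp add: sum_distrib_left)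
  finally show ?thesis
    using a2_pos sum_pos2[of "{..N2}" 0 "\<lambda>n. a2 ^ n / fact n"]
    by (simp add: one_minus_sum_prod_form normalizer_no_borrowing[OF assms] erlangB_def)
qed

lemma blocking2_no_borrowing:
  assumes "k1 = 0" "k2 = 0"
  shows "1 - (\<Sum>s\<in>S. prod_form s * admit2 s) = erlangB N2 a2"
proof -
  have "a1 ^ n1 / fact n1 * (a2 ^ n2 / fact n2) * (1 - admit2 (n1, n2))
      = (if n2 = N2 then a1 ^ n1 / fact n1 * (a2 ^ N2 / fact N2) else 0)"
    if "n1 \<le> N1" "n2 \<le> N2" for n1 n2
    unfolding admit2_def using that assms by (auto simp: adm_eq_admit_level admit_level_def)
  then have "(\<Sum>s\<in>S. weight s * (1 - admit2 s))
      = (\<Sum>n1\<le>N1. \<Sum>n2\<le>N2. if n2 = N2 then a1 ^ n1 / fact n1 * (a2 ^ N2 / fact N2) else 0)"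
    unfolding sum_weight_no_borrowing[OF assms] by (intro sum.cong refl) auto
  also have "\<dots> = (\<Sum>n\<le>N1. a1 ^ n / fact n) * (a2 ^ N2 / fact N2)"
    by (simp add: sum_distrib_right del: times_divide_eq_left times_divide_eq_right)
  finally show ?thesis
    using a1_pos sum_pos2[of "{..N1}" 0 "\<lambda>n. a1 ^ n / fact n"]
    by (simp add: one_minus_sum_prod_form normalizer_no_borrowing[OF assms] erlangB_def)
qed

end

lemma nat_floor_mult_less:
  assumes "0 \<le> t" "t < 1" "0 < N"
  shows "nat \<lfloor>t * real N\<rfloor> < N"
proof -
  have "t * real N < real N" using assms by simp
  then show ?thesis using assms by (simp add: nat_less_iff floor_less_iff)
qed

lemma B1_no_sharing:
  assumes "0 < l1" "0 < l2" "0 < m1" "0 < m2"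
  shows "B1 N1 N2 l1 l2 m1 m2 (0, 0) = erlangB N1 (l1 / m1)"
proof -
  interpret bounded_overflow N1 N2 l1 l2 m1 m2 0 0 using assms by unfold_locales
  show ?thesis using blocking1_no_borrowing by (simp add: B1_eq a1_def)
qed

lemma B2_no_sharing:
  assumes "0 < l1" "0 < l2" "0 < m1" "0 < m2"
  shows "B2 N1 N2 l1 l2 m1 m2 (0, 0) = erlangB N2 (l2 / m2)"
proof -
  interpret bounded_overflow N1 N2 l1 l2 m1 m2 0 0 using assms by unfold_locales
  show ?thesis using blocking2_no_borrowing by (simp add: B2_eq a2_def)
qed

lemma B1_full_sharing_eq_B2:
  assumes "0 < l1" "0 < l2" "0 < m1" "0 < m2"
  shows "B1 N1 N2 l1 l2 m1 m2 (1, 1) = B2 N1 N2 l1 l2 m1 m2 (1, 1)"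
proof -
  interpret bounded_overflow N1 N2 l1 l2 m1 m2 "real N1" "real N2" using assms by unfold_locales
  have "admit1 s = admit2 s" if "s \<in> S" for s
    using that
    by (auto simp: admit1_def admit2_def adm_eq_admit_level admit_level_def bo_states_def)
  then show ?thesis by (simp add: B1_eq B2_eq)
qed

lemma util_obj_full_sharing_less:
  assumes "0 < N1" "0 < N2" "0 < l1" "0 < l2" "0 < m1" "0 < m2" "m1 = m2"
    and "x \<in> unit_square" "x \<noteq> (1, 1)"
  shows "util_obj N1 N2 l1 l2 m1 m2 (1, 1) < util_obj N1 N2 l1 l2 m1 m2 x"
proof -
  interpret X: bounded_overflow N1 N2 l1 l2 m1 m2 "fst x * real N1" "snd x * real N2"
    using assms by unfold_locales
  interpret full: bounded_overflow N1 N2 l1 l2 m1 m2 "real N1" "real N2"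
    using assms by unfold_locales
  have "fst x < 1 \<or> snd x < 1" "0 \<le> fst x" "0 \<le> snd x"
    using assms(8,9) by (auto simp: unit_square_def less_eq_real_def prod_eq_iff)
  then have "nat \<lfloor>fst x * real N1\<rfloor> < N1 \<or> nat \<lfloor>snd x * real N2\<rfloor> < N2"
    using assms(1,2) nat_floor_mult_less by blast
  then have "m1 * X.mean_total / (l1 + l2) < m1 * full.mean_total / (l1 + l2)"
    using assms(3-5)
    by (intro divide_strict_right_mono mult_strict_left_mono X.mean_total_less_full_sharing) auto
  moreover have "util_obj N1 N2 l1 l2 m1 m2 x = 1 - m1 * X.mean_total / (l1 + l2)"
    by (rule X.util_obj_eq_mean_total) (simp_all add: assms(7))
  moreover have "util_obj N1 N2 l1 l2 m1 m2 (1, 1) = 1 - m1 * full.mean_total / (l1 + l2)"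
    by (rule full.util_obj_eq_mean_total) (simp_all add: assms(7))
  ultimately show ?thesis by linarith
qed

lemma util_obj_eq_common_blocking:
  assumes "0 < l1 + l2" "B1 N1 N2 l1 l2 m1 m2 x = b" "B2 N1 N2 l1 l2 m1 m2 x = b"
  shows "util_obj N1 N2 l1 l2 m1 m2 x = b"
proof -
  have "util_obj N1 N2 l1 l2 m1 m2 x = (l1 + l2) * b / (l1 + l2)"
    unfolding util_obj_eq assms(2,3) by (simp add: distrib_right)
  then show ?thesis using assms(1) by simp
qed

lemma util_obj_minimizer_in_pareto_set:
  assumes "0 < l1" "0 < l2" "QoS_stable N1 N2 l1 l2 m1 m2 x"
    and min: "\<forall>x'\<in>unit_square. util_obj N1 N2 l1 l2 m1 m2 x \<le> util_obj N1 N2 l1 l2 m1 m2 x'"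
  shows "x \<in> pareto_set N1 N2 l1 l2 m1 m2"
proof -
  let ?B1 = "B1 N1 N2 l1 l2 m1 m2" and ?B2 = "B2 N1 N2 l1 l2 m1 m2"
  have "\<not> (?B1 x' \<le> ?B1 x \<and> ?B2 x' \<le> ?B2 x \<and> (?B1 x' < ?B1 x \<or> ?B2 x' < ?B2 x))"
    if "x' \<in> unit_square" for x'
  proof
    assume "?B1 x' \<le> ?B1 x \<and> ?B2 x' \<le> ?B2 x \<and> (?B1 x' < ?B1 x \<or> ?B2 x' < ?B2 x)"
    then have "l1 * ?B1 x' + l2 * ?B2 x' < l1 * ?B1 x + l2 * ?B2 x"
      using assms(1,2) by (smt (verit) mult_left_mono mult_strict_left_mono)
    then have "util_obj N1 N2 l1 l2 m1 m2 x' < util_obj N1 N2 l1 l2 m1 m2 x"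
      using assms(1,2) by (simp add: util_obj_eq divide_strict_right_mono)
    then show False using min that by fastforce
  qed
  then show ?thesis using assms(3) unfolding pareto_set_def by blast
qed

lemma full_sharing_in_pareto_set:
  assumes "0 < N1" "0 < N2" "0 < l1" "0 < l2" "0 < m1" "0 < m2" "m1 = m2"
    and "erlangB N1 (l1 / m1) = erlangB N2 (l2 / m2)"
  shows "(1, 1) \<in> pareto_set N1 N2 l1 l2 m1 m2"
proof -
  let ?U = "util_obj N1 N2 l1 l2 m1 m2"
  have squares: "(1, 1) \<in> unit_square" "(0, 0) \<in> unit_square" by (simp_all add: unit_square_def)
  have B1_B2: "B1 N1 N2 l1 l2 m1 m2 (1, 1) = B2 N1 N2 l1 l2 m1 m2 (1, 1)"
    using assms by (intro B1_full_sharing_eq_B2)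
  have "?U (1, 1) = B1 N1 N2 l1 l2 m1 m2 (1, 1)"
    using assms(3,4) B1_B2 by (intro util_obj_eq_common_blocking) simp_all
  moreover have "?U (0, 0) = erlangB N1 (l1 / m1)"
    using assms B1_no_sharing B2_no_sharing by (intro util_obj_eq_common_blocking) simp_all
  moreover have "?U (1, 1) < ?U (0, 0)"
    using assms(1-7) squares(2) by (rule util_obj_full_sharing_less) simp
  ultimately have "QoS_stable N1 N2 l1 l2 m1 m2 (1, 1)"
    unfolding QoS_stable_def using B1_B2 assms(8) squares(1) by simp
  moreover have "\<forall>x'\<in>unit_square. ?U (1, 1) \<le> ?U x'"
    using util_obj_full_sharing_less[OF assms(1-7)] by (metis less_eq_real_def)
  ultimately show ?thesis using assms(3,4) by (intro util_obj_minimizer_in_pareto_set)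
qed

lemma closure_pareto_set_subset: "closure (pareto_set N1 N2 l1 l2 m1 m2) \<subseteq> unit_square"
proof (rule closure_minimal)
  show "pareto_set N1 N2 l1 l2 m1 m2 \<subseteq> unit_square"
    by (auto simp: pareto_set_def QoS_stable_def)
  show "closed unit_square"
    unfolding unit_square_def by (intro closed_Times closed_atLeastAtMost)
qed

theorem corollary1:
  fixes N1 N2 :: nat and l1 l2 m1 m2 :: real
  assumes "0 < N1" and "0 < N2"
    and "0 < l1" and "0 < l2" and "0 < m1" and "0 < m2"
    and "m1 = m2"
    and "erlangB N1 (l1 / m1) = erlangB N2 (l2 / m2)"
  shows "(1, 1) \<in> closure (pareto_set N1 N2 l1 l2 m1 m2) \<and>
         (\<forall>x\<in>closure (pareto_set N1 N2 l1 l2 m1 m2). x \<noteq> (1, 1) \<longrightarrow>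
            util_obj N1 N2 l1 l2 m1 m2 (1, 1) < util_obj N1 N2 l1 l2 m1 m2 x)"
proof (intro conjI ballI impI)
  show "(1, 1) \<in> closure (pareto_set N1 N2 l1 l2 m1 m2)"
    using closure_subset full_sharing_in_pareto_set[OF assms] by (rule subsetD)
next
  fix x assume "x \<in> closure (pareto_set N1 N2 l1 l2 m1 m2)" "x \<noteq> (1, 1)"
  then show "util_obj N1 N2 l1 l2 m1 m2 (1, 1) < util_obj N1 N2 l1 l2 m1 m2 x"
    using util_obj_full_sharing_less[OF assms(1-7)] closure_pareto_set_subset by blast
qed

end
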